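(* Let $k>1$ be an integer and $L\in\mathcal L_k$. Then the automorphism group of the subgraph of $\mathcal F_k$ induced on $\phi_k^{-1}(L)$ is uncountable.
   Context: The vertex set $V$ consists of all reduced fractions $p/q$ with $p,q\in\mathbb Z$, $\gcd(p,q)=1$, together with $1/0$; here $p/q$ and $(-p)/(-q)$ denote the same vertex. For vertices define $d(p/q,a/b)=|pb-qa|$. The graph $\mathcal F_k$ has vertex set $V$, with an edge between $p/q$ and $a/b$ exactly when $d(p/q,a/b)=k$. An element $(a,b)\in(\mathbb Z/k\mathbb Z)^2$ is admissible if for $\lambda\in\mathbb Z/k\mathbb Z$, $(\lambda a,\lambda b)=0$ implies $\lambda=0$; $\mathcal L_k$ is the set of admissible elements modulo $v\sim\lambda v$ for units $\lambda\in(\mathbb Z/k\mathbb Z)^*$; $\phi_k:V\to\mathcal L_k$ sends $p/q$ to the class of $(p\bmod k,q\bmod k)$. *)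

theory Defs
  imports Main "HOL-Library.Countable_Set"
begin

text \<open>Vertices: reduced fractions p/q, including 1/0, with p/q and (-p)/(-q) identified.\<close>
definition farey_vertices :: "(int \<times> int) set" where
  "farey_vertices = {(p, q). coprime p q \<and> (q > 0 \<or> (q = 0 \<and> p = 1))}"

definition fdist :: "int \<times> int \<Rightarrow> int \<times> int \<Rightarrow> int" where
  "fdist v w = \<bar>fst v * snd w - snd v * fst w\<bar>"

definition Fk_adj :: "int \<Rightarrow> int \<times> int \<Rightarrow> int \<times> int \<Rightarrow> bool" where
  "Fk_adj k v w \<longleftrightarrow> v \<in> farey_vertices \<and> w \<in> farey_vertices \<and> fdist v w = k"

text \<open>Z/kZ is represented by the residues {0..<k}.\<close>
definition admissible :: "int \<Rightarrow> int \<times> int \<Rightarrow> bool" where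
  "admissible k ab \<longleftrightarrow> fst ab \<in> {0..<k} \<and> snd ab \<in> {0..<k} \<and>
     (\<forall>l\<in>{0..<k}. (l * fst ab) mod k = 0 \<and> (l * snd ab) mod k = 0 \<longrightarrow> l = 0)"

definition unit_equiv :: "int \<Rightarrow> ((int \<times> int) \<times> (int \<times> int)) set" where
  "unit_equiv k = {(ab, cd). admissible k ab \<and> admissible k cd \<and>
     (\<exists>l\<in>{0..<k}. coprime l k \<and> fst cd = (l * fst ab) mod k \<and> snd cd = (l * snd ab) mod k)}"

definition Lk :: "int \<Rightarrow> (int \<times> int) set set" where
  "Lk k = {ab. admissible k ab} // unit_equiv k"

definition phi :: "int \<Rightarrow> int \<times> int \<Rightarrow> (int \<times> int) set" where
  "phi k v = unit_equiv k `` {(fst v mod k, snd v mod k)}"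

definition induced_automorphisms :: "int \<Rightarrow> (int \<times> int) set \<Rightarrow> ((int \<times> int) \<Rightarrow> (int \<times> int)) set" where
  "induced_automorphisms k S = {f. bij_betw f S S \<and> (\<forall>x. x \<notin> S \<longrightarrow> f x = x) \<and>
     (\<forall>x\<in>S. \<forall>y\<in>S. Fk_adj k x y \<longleftrightarrow> Fk_adj k (f x) (f y))}"

end

theory Submission
  imports Defs "HOL-Number_Theory.Cong" "HOL-Library.Product_Plus"
begin

text \<open>
  Two vertices \<open>p/q\<close> and \<open>a/b\<close> with \<open>k\<close> dividing \<open>q\<close> and \<open>b\<close> but with different integer
  parts are at distance at least \<open>q + b \<ge> 2k\<close>. So in the fibre of \<open>1/0\<close> every edge joins
  vertices with equal integer parts or contains \<open>1/0\<close>, and translating a block of equal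
  integer parts by an integer preserves distances. Hence for every set \<open>A\<close> of integers,
  exchanging the blocks \<open>[2n, 2n+1)\<close> and \<open>[2n+1, 2n+2)\<close> for all \<open>n \<in> A\<close> is an
  automorphism, and there are uncountably many. Every fibre of \<open>\<phi>\<^sub>k\<close> is nonempty, and a
  matrix in \<open>SL\<^sub>2(\<int>)\<close> sending \<open>1/0\<close> to one of its vertices maps the fibre of \<open>1/0\<close>
  bijectively and isometrically onto it: it preserves \<open>d\<close> and multiplies residues mod \<open>k\<close>
  by a unit.
\<close>

lemma uncountable_int_sets: "uncountable (UNIV :: int set set)"
proof
  assume "countable (UNIV :: int set set)"
  then have "range (from_nat_into (UNIV :: int set set) \<circ> nat) = Pow UNIV"
    by (metis Pow_UNIV image_comp nat_int range_from_nat_into surjI UNIV_not_empty)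
  then show False
    using Cantors_theorem[of "UNIV :: int set"] by blast
qed

lemma coprime_add_mult_left_iff: "coprime (p + s * q) q \<longleftrightarrow> coprime p (q :: 'a :: ring_gcd)"
  by (metis add.commute coprime_iff_gcd_eq_1 gcd.commute gcd_add_mult)

lemma fdist_sym: "fdist v w = fdist w v"
  unfolding fdist_def by (metis abs_minus_commute mult.commute)

lemma fdist_add_mult:
  "fdist (p + s * q, q) (a + t * b, b) = \<bar>p * b - q * a + (s - t) * q * b\<bar>"
  by (simp add: fdist_def algebra_simps)

lemma fdist_ge_if_div_less:
  fixes p q a b :: int
  assumes "q > 0" "b > 1" "coprime a b" "p div q < a div b"
  shows "q + b \<le> fdist (p, q) (a, b)"
proof -
  have "p < (a div b) * q"
  proof -
    have "(p div q + 1) * q \<le> (a div b) * q"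
      using assms by (intro mult_right_mono) auto
    then have "p div q * q + q \<le> (a div b) * q"
      by (simp add: distrib_right)
    then show ?thesis
      using div_mult_mod_eq[of p q] pos_mod_bound[OF assms(1), of p] by linarith
  qed
  have "\<not> b dvd a"
    using assms(2,3) coprime_absorb_left by fastforce
  then have "a mod b \<noteq> 0"
    by (simp add: dvd_eq_mod_eq_0)
  then have "a mod b \<ge> 1"
    using assms(2) pos_mod_sign[of b a] by linarith
  have "q * a - p * b = q * (a div b * b + a mod b) - p * b"
    by simp
  also have "\<dots> = q * (a mod b) + b * ((a div b) * q - p)"
    by (simp only: ring_distribs ac_simps)
  moreover have "q * (a mod b) \<ge> q" "b * ((a div b) * q - p) \<ge> b"
    using \<open>a mod b \<ge> 1\<close> \<open>p < (a div b) * q\<close> assms(1,2) by simp_all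
  ultimately show ?thesis
    by (simp add: fdist_def)
qed

text \<open>The fibre \<open>\<phi>\<^sub>k\<^sup>-\<^sup>1\<close> of the class of \<open>1/0\<close>.\<close>
definition den_dvd_vertices :: "int \<Rightarrow> (int \<times> int) set" where
  "den_dvd_vertices k = {w \<in> farey_vertices. k dvd snd w}"

text \<open>The integer part \<open>j\<close> of a vertex is moved to \<open>j + swap_shift A j\<close>: for \<open>n \<in> A\<close> the
  blocks \<open>[2n, 2n+1)\<close> and \<open>[2n+1, 2n+2)\<close> are exchanged by a translation.\<close>
definition swap_shift :: "int set \<Rightarrow> int \<Rightarrow> int" where
  "swap_shift A j = (if j div 2 \<in> A then if even j then 1 else -1 else 0)"

lemma swap_shift_swap_shift: "swap_shift A (j + swap_shift A j) = - swap_shift A j"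
  by (auto simp: swap_shift_def elim!: evenE oddE)

lemma inj_add_swap_shift: "inj (\<lambda>j. j + swap_shift A j)"
proof (rule injI)
  fix i j assume "i + swap_shift A i = j + swap_shift A j"
  then show "i = j"
    using swap_shift_swap_shift[of A i] swap_shift_swap_shift[of A j] by simp
qed

definition block_swap :: "int \<Rightarrow> int set \<Rightarrow> int \<times> int \<Rightarrow> int \<times> int" where
  "block_swap k A x =
     (if x \<in> den_dvd_vertices k \<and> snd x > 0
      then (fst x + swap_shift A (fst x div snd x) * snd x, snd x) else x)"

lemma block_swap_mem: "x \<in> den_dvd_vertices k \<Longrightarrow> block_swap k A x \<in> den_dvd_vertices k"
  by (auto simp: block_swap_def den_dvd_vertices_def farey_vertices_def coprime_add_mult_left_iff)

lemma block_swap_div: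
  assumes "x \<in> den_dvd_vertices k" "snd x > 0"
  shows "fst (block_swap k A x) div snd x = fst x div snd x + swap_shift A (fst x div snd x)"
  using assms by (simp add: block_swap_def)

lemma block_swap_block_swap:
  assumes "x \<in> den_dvd_vertices k"
  shows "block_swap k A (block_swap k A x) = x"
proof (cases "snd x > 0")
  case True
  have "swap_shift A (fst (block_swap k A x) div snd x) = - swap_shift A (fst x div snd x)"
    using block_swap_div[OF assms True] swap_shift_swap_shift by simp
  then show ?thesis
    using assms True block_swap_mem[OF assms] by (simp add: block_swap_def algebra_simps)
qed (simp add: block_swap_def)

lemma fdist_ne_if_div_ne:
  assumes "(p, q) \<in> den_dvd_vertices k" "(a, b) \<in> den_dvd_vertices k" "k > 1"
    and "q > 0" "b > 0" "p div q \<noteq> a div b"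
  shows "fdist (p, q) (a, b) \<noteq> k"
proof -
  have "k \<le> q" "k \<le> b" "coprime p q" "coprime a b"
    using assms by (auto simp: den_dvd_vertices_def farey_vertices_def zdvd_imp_le)
  then have "q + b \<le> fdist (p, q) (a, b)"
    using assms(3-6) fdist_ge_if_div_less[of q b a p] fdist_ge_if_div_less[of b q p a] fdist_sym
    by (cases "p div q < a div b") (auto simp: add.commute)
  then show ?thesis
    using \<open>k \<le> q\<close> \<open>k \<le> b\<close> \<open>k > 1\<close> by linarith
qed

lemma fdist_block_swap_eq_iff:
  assumes "x \<in> den_dvd_vertices k" "y \<in> den_dvd_vertices k" "k > 1"
  shows "fdist (block_swap k A x) (block_swap k A y) = k \<longleftrightarrow> fdist x y = k"
proof -
  obtain p q a b where xy: "x = (p, q)" "y = (a, b)"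
    by fastforce
  define s where "s = (if q > 0 then swap_shift A (p div q) else 0)"
  define t where "t = (if b > 0 then swap_shift A (a div b) else 0)"
  have swap: "block_swap k A x = (p + s * q, q)" "block_swap k A y = (a + t * b, b)"
    using assms xy by (auto simp: block_swap_def s_def t_def)
  show ?thesis
  proof (cases "s = t \<or> q = 0 \<or> b = 0")
    case True
    then have "fdist (block_swap k A x) (block_swap k A y) = fdist x y"
      unfolding swap fdist_add_mult using xy by (auto simp: fdist_def)
    then show ?thesis
      by simp
  next
    case False
    then have "q > 0" "b > 0"
      using assms xy by (auto simp: den_dvd_vertices_def farey_vertices_def)
    then have "p div q \<noteq> a div b"
      using False s_def t_def by auto
    moreover have "fst (block_swap k A x) div q \<noteq> fst (block_swap k A y) div b"
      using calculation inj_add_swap_shift[of A] block_swap_div[OF assms(1), of A]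
        block_swap_div[OF assms(2), of A] xy \<open>q > 0\<close> \<open>b > 0\<close>
      by (auto dest: injD)
    ultimately show ?thesis
      using fdist_ne_if_div_ne[of _ q k _ b] assms block_swap_mem swap xy \<open>q > 0\<close> \<open>b > 0\<close>
      by (metis fst_conv)
  qed
qed

lemma block_swap_automorphism:
  assumes "k > 1"
  shows "block_swap k A \<in> induced_automorphisms k (den_dvd_vertices k)"
  unfolding induced_automorphisms_def
proof (intro CollectI conjI allI impI ballI)
  show "bij_betw (block_swap k A) (den_dvd_vertices k) (den_dvd_vertices k)"
    by (rule bij_betw_byWitness[where f' = "block_swap k A"])
      (auto simp: block_swap_block_swap block_swap_mem)
  show "block_swap k A x = x" if "x \<notin> den_dvd_vertices k" for x
    using that by (simp add: block_swap_def)
  show "Fk_adj k x y \<longleftrightarrow> Fk_adj k (block_swap k A x) (block_swap k A y)"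
    if "x \<in> den_dvd_vertices k" "y \<in> den_dvd_vertices k" for x y
    using that block_swap_mem fdist_block_swap_eq_iff[OF that assms]
    by (auto simp: Fk_adj_def den_dvd_vertices_def)
qed

lemma inj_block_swap:
  assumes "k > 1"
  shows "inj (block_swap k)"
proof (rule injI)
  fix A B assume eq: "block_swap k A = block_swap k B"
  have "swap_shift A (2 * n) = swap_shift B (2 * n)" for n
  proof -
    define x where "x = (1 + 2 * n * k, k)"
    have "x \<in> den_dvd_vertices k" "(1 + 2 * n * k) div k = 2 * n"
      using assms coprime_add_mult_left_iff[of 1 "2 * n" k]
      by (simp_all add: x_def den_dvd_vertices_def farey_vertices_def)
    then have "fst (block_swap k A x) = 1 + 2 * n * k + swap_shift A (2 * n) * k"
      "fst (block_swap k B x) = 1 + 2 * n * k + swap_shift B (2 * n) * k"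
      using assms by (simp_all add: block_swap_def x_def)
    then show ?thesis
      using eq assms by simp
  qed
  moreover have "swap_shift C (2 * n) = (if n \<in> C then 1 else 0)" for C n
    by (simp add: swap_shift_def)
  ultimately have "n \<in> A \<longleftrightarrow> n \<in> B" for n
    by (metis one_neq_zero)
  then show "A = B"
    by blast
qed

lemma uncountable_automorphisms_den_dvd_vertices:
  assumes "k > 1"
  shows "uncountable (induced_automorphisms k (den_dvd_vertices k))"
proof
  assume "countable (induced_automorphisms k (den_dvd_vertices k))"
  then have "countable (range (block_swap k))"
    using block_swap_automorphism[OF assms] by (blast intro: countable_subset)
  then show False
    using countable_image_inj_on[OF _ inj_block_swap[OF assms]] uncountable_int_sets by blast
qed

definition mat_act :: "int \<Rightarrow> int \<Rightarrow> int \<Rightarrow> int \<Rightarrow> int \<times> int \<Rightarrow> int \<times> int" where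
  "mat_act a b c d u = (a * fst u + b * snd u, c * fst u + d * snd u)"

lemma mat_act_uminus: "mat_act a b c d (- u) = - mat_act a b c d u"
  by (simp add: mat_act_def)

lemma mat_act_inverse:
  assumes "a * d - b * c = 1"
  shows "mat_act d (- b) (- c) a (mat_act a b c d u) = u"
proof -
  have "mat_act d (- b) (- c) a (mat_act a b c d u) = ((a * d - b * c) * fst u, (a * d - b * c) * snd u)"
    by (simp add: mat_act_def algebra_simps)
  then show ?thesis
    using assms by simp
qed

lemma coprime_mat_act:
  assumes "a * d - b * c = 1" "coprime (fst u) (snd u)"
  shows "coprime (fst (mat_act a b c d u)) (snd (mat_act a b c d u))"
proof (rule coprimeI)
  fix e assume "e dvd fst (mat_act a b c d u)" "e dvd snd (mat_act a b c d u)"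
  then have "e dvd fst (mat_act d (- b) (- c) a (mat_act a b c d u))"
    "e dvd snd (mat_act d (- b) (- c) a (mat_act a b c d u))"
    by (simp_all add: mat_act_def)
  then show "is_unit e"
    using assms coprime_common_divisor mat_act_inverse by metis
qed

lemma fdist_mat_act:
  assumes "a * d - b * c = 1"
  shows "fdist (mat_act a b c d u) (mat_act a b c d v) = fdist u v"
proof -
  have "fdist (mat_act a b c d u) (mat_act a b c d v)
      = \<bar>(a * d - b * c) * (fst u * snd v - snd u * fst v)\<bar>"
    by (simp add: fdist_def mat_act_def algebra_simps)
  then show ?thesis
    using assms by (simp add: fdist_def)
qed

definition vertex_of :: "int \<times> int \<Rightarrow> int \<times> int" where
  "vertex_of u = (if snd u < 0 \<or> (snd u = 0 \<and> fst u < 0) then - u else u)"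

lemma vertex_of_cases: "vertex_of u = u \<or> vertex_of u = - u"
  by (simp add: vertex_of_def)

lemma fdist_uminus_left: "fdist (- u) v = fdist u v"
  by (simp add: fdist_def abs_minus_commute)

lemma fdist_uminus_right: "fdist u (- v) = fdist u v"
  by (simp add: fdist_def abs_minus_commute)

lemma fdist_vertex_of: "fdist (vertex_of u) (vertex_of v) = fdist u v"
  using vertex_of_cases[of u] vertex_of_cases[of v]
  by (auto simp: fdist_uminus_left fdist_uminus_right)

lemma vertex_of_mem:
  assumes "coprime (fst u) (snd u)"
  shows "vertex_of u \<in> farey_vertices"
proof -
  obtain p q where u: "u = (p, q)"
    by fastforce
  have "q = 0 \<Longrightarrow> p = 1 \<or> p = -1"
    using assms u by auto
  then show ?thesis
    using assms u by (auto simp: vertex_of_def farey_vertices_def)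
qed

lemma vertex_of_eqI: "v \<in> farey_vertices \<Longrightarrow> u = v \<or> u = - v \<Longrightarrow> vertex_of u = v"
  by (auto simp: vertex_of_def farey_vertices_def)

lemma vertex_of_mat_act_inverse:
  assumes "a * d - b * c = 1" "v \<in> farey_vertices"
  shows "vertex_of (mat_act d (- b) (- c) a (vertex_of (mat_act a b c d v))) = v"
  using vertex_of_cases[of "mat_act a b c d v"] assms
  by (auto intro: vertex_of_eqI simp: mat_act_uminus mat_act_inverse)

lemma admissible_mod:
  fixes p q k :: int
  assumes "k > 1" "coprime p q"
  shows "admissible k (p mod k, q mod k)"
  unfolding admissible_def
proof (intro conjI ballI impI)
  show "fst (p mod k, q mod k) \<in> {0..<k}" "snd (p mod k, q mod k) \<in> {0..<k}"
    using assms(1) by auto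
  fix l assume l: "l \<in> {0..<k}"
    and "(l * fst (p mod k, q mod k)) mod k = 0 \<and> (l * snd (p mod k, q mod k)) mod k = 0"
  then have "k dvd l * p" "k dvd l * q"
    by (auto simp: mod_mult_right_eq dvd_eq_mod_eq_0)
  then have "k dvd \<bar>l\<bar> * gcd p q"
    by (metis gcd_greatest gcd_mult_distrib_int)
  then show "l = 0"
    using l assms by (auto dest: zdvd_imp_le)
qed

lemma phi_subset_if_cong:
  assumes "k > 1" "coprime (fst u') (snd u')" "coprime \<mu> k"
    and "[fst u = \<mu> * fst u'] (mod k)" "[snd u = \<mu> * snd u'] (mod k)"
  shows "phi k u \<subseteq> phi k u'"
proof
  fix z assume "z \<in> phi k u"
  then obtain l where z: "admissible k z" "l \<in> {0..<k}" "coprime l k"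
    "fst z = (l * (fst u mod k)) mod k" "snd z = (l * (snd u mod k)) mod k"
    by (auto simp: phi_def unit_equiv_def)
  define l' where "l' = (l * \<mu>) mod k"
  have "l' \<in> {0..<k}" "coprime l' k"
    using assms(1,3) z(3) by (simp_all add: l'_def)
  moreover have "(l * (x mod k)) mod k = (l' * (x' mod k)) mod k" if "[x = \<mu> * x'] (mod k)" for x x'
    using that unfolding l'_def cong_def
    by (metis mod_mult_left_eq mod_mult_right_eq mult.assoc)
  ultimately have "((fst u' mod k, snd u' mod k), z) \<in> unit_equiv k"
    using admissible_mod[OF assms(1,2)] z assms(4,5) by (auto simp: unit_equiv_def)
  then show "z \<in> phi k u'"
    by (simp add: phi_def)
qed

lemma phi_eq_if_cong:
  assumes "k > 1" "coprime (fst u) (snd u)" "coprime (fst u') (snd u')" "coprime \<mu> k"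
    and "[fst u = \<mu> * fst u'] (mod k)" "[snd u = \<mu> * snd u'] (mod k)"
  shows "phi k u = phi k u'"
proof
  show "phi k u \<subseteq> phi k u'"
    using phi_subset_if_cong assms by blast
  obtain \<nu> where \<nu>: "[\<mu> * \<nu> = 1] (mod k)"
    using cong_solve_coprime_int[OF assms(4)] by blast
  then have "coprime \<nu> k"
    by (metis cong_imp_coprime cong_sym coprime_1_left coprime_mult_left_iff)
  moreover have "[x' = \<nu> * x] (mod k)" if "[x = \<mu> * x'] (mod k)" for x x'
  proof -
    have "[\<nu> * x = \<nu> * (\<mu> * x')] (mod k)"
      using that by (rule cong_scalar_left)
    moreover have "[\<nu> * (\<mu> * x') = x'] (mod k)"
      using cong_scalar_right[OF \<nu>, of x'] by (simp add: ac_simps)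
    ultimately show ?thesis
      using cong_sym cong_trans by blast
  qed
  ultimately show "phi k u' \<subseteq> phi k u"
    using phi_subset_if_cong assms by blast
qed

lemma phi_vertex_of:
  assumes "k > 1" "coprime (fst u) (snd u)"
  shows "phi k (vertex_of u) = phi k u"
  using vertex_of_cases[of u]
proof
  assume "vertex_of u = - u"
  then show ?thesis
    using assms phi_eq_if_cong[of k "- u" u "-1"] by simp
qed simp

lemma cong_if_phi_eq:
  assumes "k > 1" "coprime (fst v) (snd v)" "phi k v = phi k v0"
  obtains l where "[fst v = l * fst v0] (mod k)" "[snd v = l * snd v0] (mod k)"
proof -
  have "(fst v mod k, snd v mod k) \<in> phi k v"
    using admissible_mod[OF assms(1,2)] assms(1)
    by (auto simp: phi_def unit_equiv_def intro!: bexI[of _ 1])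
  then have "(fst v mod k, snd v mod k) \<in> phi k v0"
    using assms(3) by simp
  then obtain l where "fst v mod k = (l * (fst v0 mod k)) mod k" "snd v mod k = (l * (snd v0 mod k)) mod k"
    by (auto simp: phi_def unit_equiv_def)
  then show ?thesis
    using that by (simp add: cong_def mod_mult_right_eq)
qed

lemma prime_common_divisor_if_not_coprime:
  fixes x y :: "'a :: factorial_semiring_gcd"
  assumes "\<not> coprime x y" "y \<noteq> 0"
  obtains r where "prime r" "r dvd x" "r dvd y"
proof -
  have "gcd x y \<noteq> 0" "\<not> is_unit (gcd x y)"
    using assms by (auto simp: coprime_iff_gcd_eq_1)
  then obtain r where "prime r" "r dvd gcd x y"
    using prime_divisor_exists by blast
  then show ?thesis
    using that by simp
qed

text \<open>The factor \<open>\<Prod>P\<close> makes \<open>a + k t\<close> prime to the primes of \<open>q\<close> not dividing \<open>a\<close>; the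
  primes of \<open>q\<close> dividing \<open>a\<close> do not divide \<open>k\<close>.\<close>
lemma exists_coprime_add_mult:
  fixes a q k :: int
  assumes "q \<noteq> 0" "coprime (gcd a q) k"
  shows "\<exists>t. coprime (a + k * t) q"
proof -
  define P where "P = {r \<in> prime_factors q. \<not> r dvd a}"
  have "finite P"
    by (simp add: P_def)
  have "coprime (a + k * \<Prod>P) q"
  proof (rule ccontr)
    assume "\<not> coprime (a + k * \<Prod>P) q"
    then obtain r where r: "prime r" "r dvd a + k * \<Prod>P" "r dvd q"
      using assms(1) prime_common_divisor_if_not_coprime by blast
    show False
    proof (cases "r dvd a")
      case True
      then have "r dvd k * \<Prod>P"
        using r(2) by (simp add: dvd_add_right_iff)
      moreover have "\<not> r dvd k"
      proof
        assume "r dvd k"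
        moreover have "r dvd gcd a q"
          using True r(3) by simp
        ultimately show False
          using assms(2) r(1) coprime_common_divisor not_prime_unit by blast
      qed
      moreover have "\<not> r dvd \<Prod>P"
        using True r(1) \<open>finite P\<close>
        by (auto simp: prime_dvd_prod_iff P_def in_prime_factors_iff dest: primes_dvd_imp_eq)
      ultimately show False
        using r(1) by (simp add: prime_dvd_mult_iff)
    next
      case False
      then have "r \<in> P"
        using r(1,3) assms(1) by (simp add: P_def in_prime_factors_iff)
      then have "r dvd k * \<Prod>P"
        using dvd_prodI[OF \<open>finite P\<close>, of r "\<lambda>x. x"] by simp
      then show False
        using False r(2) by (simp add: dvd_add_left_iff)
    qed
  qed
  then show ?thesis
    by blast
qed

lemma coprime_gcd_if_admissible:
  assumes "admissible k (a, b)"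
  shows "coprime (gcd a b) k"
proof (rule ccontr)
  assume "\<not> coprime (gcd a b) k"
  moreover have "k > 0"
    using assms by (auto simp: admissible_def)
  ultimately obtain r where r: "prime r" "r dvd a" "r dvd b" "r dvd k"
    using prime_common_divisor_if_not_coprime[of "gcd a b" k] by auto
  then obtain l where l: "k = r * l"
    by blast
  have "r \<ge> 2"
    using r(1) prime_ge_2_int by blast
  then have "0 < l"
    using l \<open>k > 0\<close> by (simp add: zero_less_mult_iff)
  then have "l \<in> {0..<k}"
    using l \<open>r \<ge> 2\<close> by simp
  moreover have "k dvd l * a" "k dvd l * b"
    unfolding l using r(2,3) by (simp_all add: mult.commute mult_dvd_mono)
  ultimately have "l = 0"
    using assms unfolding admissible_def by simp
  then show False
    using \<open>0 < l\<close> by simp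
qed

text \<open>The witness has denominator \<open>b + k\<close> rather than \<open>b\<close> to keep it positive.\<close>
lemma phi_fiber_nonempty:
  assumes "k > 1" "L \<in> Lk k"
  obtains v where "v \<in> farey_vertices" "phi k v = L"
proof -
  obtain a b where L: "L = unit_equiv k `` {(a, b)}" and ab: "admissible k (a, b)"
    using assms(2) by (auto simp: Lk_def elim!: quotientE)
  then have ab_range: "0 \<le> a" "a < k" "0 \<le> b" "b < k"
    by (simp_all add: admissible_def)
  have "gcd (gcd a (b + k)) k = gcd (gcd a b) k"
    by (simp only: gcd.assoc gcd_add1)
  then have "coprime (gcd a (b + k)) k"
    using coprime_gcd_if_admissible[OF ab] by (simp only: coprime_iff_gcd_eq_1)
  then obtain t where t: "coprime (a + k * t) (b + k)"
    using exists_coprime_add_mult[of "b + k" a k] ab_range by auto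
  have "(a + k * t, b + k) \<in> farey_vertices"
    using t ab_range by (simp add: farey_vertices_def)
  moreover have "phi k (a + k * t, b + k) = L"
    using ab_range by (simp add: phi_def L)
  ultimately show ?thesis
    using that by blast
qed

lemma induced_automorphism_conjugate:
  assumes g: "bij_betw g S T" "\<And>x y. x \<in> S \<Longrightarrow> y \<in> S \<Longrightarrow> fdist (g x) (g y) = fdist x y"
    and "S \<subseteq> farey_vertices" "T \<subseteq> farey_vertices"
    and f: "f \<in> induced_automorphisms k S"
  shows "(\<lambda>z. if z \<in> T then g (f (inv_into S g z)) else z) \<in> induced_automorphisms k T"
    (is "?f \<in> _")
proof -
  let ?h = "inv_into S g"
  have f_bij: "bij_betw f S S" and f_adj: "\<And>x y. x \<in> S \<Longrightarrow> y \<in> S \<Longrightarrow> Fk_adj k x y \<longleftrightarrow> Fk_adj k (f x) (f y)"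
    using f by (auto simp: induced_automorphisms_def)
  have h_bij: "bij_betw ?h T S"
    using g(1) by (rule bij_betw_inv_into)
  have "bij_betw (g \<circ> f \<circ> ?h) T T"
    using bij_betw_trans[OF bij_betw_trans[OF h_bij f_bij] g(1)] by (simp add: comp_assoc)
  then have "bij_betw ?f T T"
    by (rule bij_betw_cong[THEN iffD1, rotated]) simp
  moreover have "Fk_adj k x y \<longleftrightarrow> Fk_adj k (?f x) (?f y)" if "x \<in> T" "y \<in> T" for x y
  proof -
    have hS: "?h x \<in> S" "?h y \<in> S"
      using that h_bij bij_betwE by blast+
    then have fhS: "f (?h x) \<in> S" "f (?h y) \<in> S"
      using f_bij bij_betwE by blast+
    have "g (?h x) = x" "g (?h y) = y"
      using g(1) that by (simp_all add: bij_betw_inv_into_right)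
    then have "fdist x y = fdist (?h x) (?h y)"
      using g(2)[OF hS] by simp
    moreover have "fdist (?f x) (?f y) = fdist (f (?h x)) (f (?h y))"
      using g(2)[OF fhS] that by simp
    moreover have "?f x \<in> T" "?f y \<in> T"
      using fhS g(1) that bij_betwE by auto
    ultimately show ?thesis
      using f_adj[OF hS] hS fhS that assms(3,4) by (auto simp: Fk_adj_def)
  qed
  ultimately show ?thesis
    by (simp add: induced_automorphisms_def)
qed

lemma countable_induced_automorphisms_if_isometric:
  assumes "bij_betw g S T" "\<And>x y. x \<in> S \<Longrightarrow> y \<in> S \<Longrightarrow> fdist (g x) (g y) = fdist x y"
    and "S \<subseteq> farey_vertices" "T \<subseteq> farey_vertices"
    and "countable (induced_automorphisms k T)"
  shows "countable (induced_automorphisms k S)"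
proof -
  define conj where "conj f = (\<lambda>z. if z \<in> T then g (f (inv_into S g z)) else z)" for f
  have "inj_on conj (induced_automorphisms k S)"
  proof (rule inj_onI, rule ext)
    fix f1 f2 w assume f: "f1 \<in> induced_automorphisms k S" "f2 \<in> induced_automorphisms k S"
      and eq: "conj f1 = conj f2"
    show "f1 w = f2 w"
    proof (cases "w \<in> S")
      case True
      then have "g (f1 w) = g (f2 w)"
        using fun_cong[OF eq, of "g w"] assms(1) by (simp add: conj_def bij_betwE bij_betw_inv_into_left)
      moreover have "f1 w \<in> S" "f2 w \<in> S"
        using f True by (auto simp: induced_automorphisms_def dest: bij_betwE)
      ultimately show ?thesis
        using assms(1) by (auto simp: bij_betw_def dest: inj_onD)
    next
      case False
      then have "f1 w = w" "f2 w = w"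
        using f unfolding induced_automorphisms_def by blast+
      then show ?thesis
        by simp
    qed
  qed
  moreover have "conj ` induced_automorphisms k S \<subseteq> induced_automorphisms k T"
    using induced_automorphism_conjugate[OF assms(1-4)] by (auto simp: conj_def)
  ultimately show ?thesis
    using assms(5) countable_subset countable_image_inj_on by metis
qed

lemma vertex_of_mat_act_mem_phi_fiber:
  assumes "k > 1" "p0 * y - x * q0 = 1" "coprime p0 q0" "w \<in> den_dvd_vertices k"
  shows "vertex_of (mat_act p0 x q0 y w) \<in> {v \<in> farey_vertices. phi k v = phi k (p0, q0)}"
proof -
  obtain a b where w: "w = (a, b)" "coprime a b" "k dvd b"
    using assms(4) by (auto simp: den_dvd_vertices_def farey_vertices_def)
  then have "coprime a k"
    using coprime_divisors[OF dvd_refl] by blast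
  have coprime_G: "coprime (fst (mat_act p0 x q0 y w)) (snd (mat_act p0 x q0 y w))"
    using coprime_mat_act[OF assms(2)] w by simp
  have "phi k (mat_act p0 x q0 y w) = phi k (p0, q0)"
  proof (rule phi_eq_if_cong[OF assms(1) coprime_G _ \<open>coprime a k\<close>])
    show "coprime (fst (p0, q0)) (snd (p0, q0))"
      using assms(3) by simp
    have "[c * a + d * b = a * c] (mod k)" for c d
      using cong_add[OF cong_refl, of "d * b" 0 k "c * a"] w(3) by (simp add: cong_0_iff mult.commute)
    then show "[fst (mat_act p0 x q0 y w) = a * fst (p0, q0)] (mod k)"
      "[snd (mat_act p0 x q0 y w) = a * snd (p0, q0)] (mod k)"
      by (simp_all add: w mat_act_def)
  qed
  then show ?thesis
    using phi_vertex_of[OF assms(1) coprime_G] vertex_of_mem[OF coprime_G] by simp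
qed

lemma vertex_of_mat_act_inverse_mem_den_dvd_vertices:
  assumes "k > 1" "p0 * y - x * q0 = 1" "v \<in> farey_vertices" "phi k v = phi k (p0, q0)"
  shows "vertex_of (mat_act y (- x) (- q0) p0 v) \<in> den_dvd_vertices k"
proof -
  have coprime_v: "coprime (fst v) (snd v)"
    using assms(3) by (auto simp: farey_vertices_def)
  then obtain l where "[fst v = l * p0] (mod k)" "[snd v = l * q0] (mod k)"
    using cong_if_phi_eq[OF assms(1) _ assms(4)] by (metis fst_conv snd_conv)
  then have "[- q0 * fst v + p0 * snd v = - q0 * (l * p0) + p0 * (l * q0)] (mod k)"
    by (intro cong_add cong_scalar_left)
  then have "k dvd snd (mat_act y (- x) (- q0) p0 v)"
    by (simp add: mat_act_def cong_0_iff algebra_simps)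
  then have "k dvd snd (vertex_of (mat_act y (- x) (- q0) p0 v))"
    using vertex_of_cases[of "mat_act y (- x) (- q0) p0 v"] by auto
  moreover have "y * p0 - (- x) * (- q0) = 1"
    using assms(2) by (simp add: algebra_simps)
  ultimately show ?thesis
    using vertex_of_mem[OF coprime_mat_act[OF _ coprime_v]] by (simp add: den_dvd_vertices_def)
qed

lemma den_dvd_vertices_isometric_phi_fiber:
  assumes "k > 1" "v0 \<in> farey_vertices"
  obtains g where "bij_betw g (den_dvd_vertices k) {v \<in> farey_vertices. phi k v = phi k v0}"
    "\<And>x y. fdist (g x) (g y) = fdist x y"
proof -
  obtain p0 q0 where v0: "v0 = (p0, q0)" "coprime p0 q0"
    using assms(2) by (auto simp: farey_vertices_def)
  then obtain u v where "u * p0 + v * q0 = 1"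
    using bezout_int[of p0 q0] by (auto simp: coprime_iff_gcd_eq_1)
  obtain x y where det: "p0 * y - x * q0 = 1"
  proof
    show "p0 * u - (- v) * q0 = 1"
      using \<open>u * p0 + v * q0 = 1\<close> by (simp add: algebra_simps)
  qed
  then have det': "y * p0 - (- x) * (- q0) = 1"
    by (simp add: algebra_simps)
  define g where "g w = vertex_of (mat_act p0 x q0 y w)" for w
  define h where "h v = vertex_of (mat_act y (- x) (- q0) p0 v)" for v
  have "bij_betw g (den_dvd_vertices k) {v \<in> farey_vertices. phi k v = phi k v0}"
  proof (rule bij_betw_byWitness[where f' = h])
    show "\<forall>w \<in> den_dvd_vertices k. h (g w) = w"
      using vertex_of_mat_act_inverse[OF det] by (simp add: g_def h_def den_dvd_vertices_def)
    show "\<forall>v \<in> {v \<in> farey_vertices. phi k v = phi k v0}. g (h v) = v"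
      using vertex_of_mat_act_inverse[OF det'] by (simp add: g_def h_def)
    show "g ` den_dvd_vertices k \<subseteq> {v \<in> farey_vertices. phi k v = phi k v0}"
      using vertex_of_mat_act_mem_phi_fiber[OF assms(1) det v0(2)] v0(1) by (auto simp: g_def)
    show "h ` {v \<in> farey_vertices. phi k v = phi k v0} \<subseteq> den_dvd_vertices k"
      using vertex_of_mat_act_inverse_mem_den_dvd_vertices[OF assms(1) det] v0(1) by (auto simp: h_def)
  qed
  moreover have "fdist (g w) (g w') = fdist w w'" for w w'
    by (simp add: g_def fdist_vertex_of fdist_mat_act[OF det])
  ultimately show ?thesis
    using that by blast
qed

theorem proposition4p15:
  fixes k :: int and L :: "(int \<times> int) set"
  assumes "k > 1" and "L \<in> Lk k"
  shows "\<not> countable (induced_automorphisms k {v \<in> farey_vertices. phi k v = L})"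
proof -
  obtain v0 where v0: "v0 \<in> farey_vertices" "phi k v0 = L"
    using phi_fiber_nonempty[OF assms] .
  obtain g where g: "bij_betw g (den_dvd_vertices k) {v \<in> farey_vertices. phi k v = phi k v0}"
    "\<And>x y. fdist (g x) (g y) = fdist x y"
    using den_dvd_vertices_isometric_phi_fiber[OF assms(1) v0(1)] by blast
  have "den_dvd_vertices k \<subseteq> farey_vertices"
    by (auto simp: den_dvd_vertices_def)
  then show ?thesis
    using countable_induced_automorphisms_if_isometric[OF g] v0(2)
      uncountable_automorphisms_den_dvd_vertices[OF assms(1)] by blast
qed

end
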